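(* Let $r\ge1$ and let $\mathcal{R}\subseteq\mathcal{A}_e$ be an $r$-Rouquier block. Then $\Phi_r(\mathcal{R})\subseteq\mathcal{A}_e^r$ is a disjoint union of Rouquier blocks of $\mathcal{A}_e^r$.
   Context: Fix an integer $e\ge 2$. A partition is a weakly decreasing sequence $\lambda=(\lambda_1,\lambda_2,\dots)$ of non-negative integers with finite sum $|\lambda|$; $\Lambda$ denotes the set of partitions and $\Lambda^{(m)}$ the set of $m$-multipartitions, i.e. $m$-tuples $\boldsymbol\lambda=(\lambda^{(1)},\dots,\lambda^{(m)})$ of partitions, with $|\boldsymbol\lambda|=\sum_k|\lambda^{(k)}|$. A $\beta$-set is a subset $B\subseteq\mathbb{Z}$ containing all sufficiently small integers and no sufficiently large ones. For $\lambda\in\Lambda$ and $s\in\mathbb{Z}$ set $B_s(\lambda)=\{\lambda_i-i+s : i\ge 1\}$; every $\beta$-set equals $B_s(\lambda)$ for a unique pair $(\lambda,s)$. Let $\mathcal{A}_e=\Lambda\times\mathbb{Z}$ (abacus configurations with $e$ runners) and $\mathcal{A}_e^m=\Lambda^{(m)}\times\mathbb{Z}^m$, where $(\boldsymbol\lambda,\mathbf{s})$ is identified with the $m$-tuple of $\beta$-sets $(B_{s_1}(\lambda^{(1)}),\dots,B_{s_m}(\lambda^{(m)}))$. Blocks: for $(\boldsymbol\lambda,\mathbf{s})\in\mathcal{A}_e^m$, its $e$-residue multiset is the multiset of the values $s_k+y-x \bmod e$ over all nodes $(x,y,k)$ with $x\ge1$, $1\le y\le\lambda^{(k)}_x$,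 $1\le k\le m$. Define $(\boldsymbol\lambda,\mathbf{s})\approx_e(\boldsymbol\mu,\mathbf{s}')$ iff $\mathbf{s}=\mathbf{s}'$, $|\boldsymbol\lambda|=|\boldsymbol\mu|$ and the $e$-residue multisets coincide. Its equivalence classes are called blocks. The map $\eta$: for $(\lambda,s)\in\mathcal{A}_e$ with $B=B_s(\lambda)$ and $0\le i<e$, the set $C_i=\{(b-i)/e : b\in B,\ b\equiv i \bmod e\}$ is a $\beta$-set, so $C_i=B_{t_i}(\rho_i)$ for a unique $(\rho_i,t_i)\in\Lambda\times\mathbb{Z}$; set $\eta(\lambda,s)=((\rho_0,\dots,\rho_{e-1}),(t_0,\dots,t_{e-1}))$. The $e$-weight of $\lambda$ is $\mathrm{wt}(\lambda)=\sum_i|\rho_i|$. Rouquier: $(\lambda,s)\in\mathcal{A}_e$ with $\eta(\lambda,s)=(\boldsymbol\rho,\mathbf{t})$ is a Rouquier partition if $\mathrm{wt}(\lambda)\le t_{i+1}-t_i+1$ for all $0\le i<e-1$, and an $r$-Rouquier partition if $\mathrm{wt}(\lambda)\le t_{i+1}-t_i+r$ for all $0\le i<e-1$. $(\boldsymbol\lambda,\mathbf{s})\in\mathcal{A}_e^r$ is a Rouquier multipartition if $(\lambda^{(k)},s_k)$ is a Rouquier partition for every $1\le k\le r$. A block of $\mathcal{A}_e^r$ is a Rouquier block if all its elements are Rouquier multipartitions; a block of $\mathcal{A}_e$ is an $r$-Rouquier block if all its elements are $r$-Rouquier partitions. Uglov's map: for $1\le k\le r$ define $\psi_k:\mathbb{Z}\to\mathbb{Z}$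 by $\psi_k(ae+i)=((a+1)r-k)e+i$ for $a\in\mathbb{Z}$, $0\le i<e$. For $(\boldsymbol\lambda,\mathbf{s})\in\mathcal{A}_e^r$ the set $B=\bigsqcup_{k=1}^r\psi_k(B_{s_k}(\lambda^{(k)}))$ is a $\beta$-set, and $\Psi_r(\boldsymbol\lambda,\mathbf{s})$ is the unique $(\tilde\lambda,\tilde s)\in\mathcal{A}_e$ with $B_{\tilde s}(\tilde\lambda)=B$. $\Psi_r:\mathcal{A}_e^r\to\mathcal{A}_e$ is a bijection; $\Phi_r=\Psi_r^{-1}$. *)

theory Defs
  imports Main "HOL-Library.Multiset"
begin

definition is_partition :: "nat list \<Rightarrow> bool" where
  "is_partition la \<longleftrightarrow> sorted_wrt (\<ge>) la \<and> 0 \<notin> set la"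

definition part :: "nat list \<Rightarrow> nat \<Rightarrow> nat" where
  "part la i = (if 1 \<le> i \<and> i \<le> length la then la ! (i - 1) else 0)"

definition beta_set :: "int \<Rightarrow> nat list \<Rightarrow> int set" where
  "beta_set s la = {int (part la i) - int i + s | i. 1 \<le> i}"

text \<open>The set A_e = Lambda x Z of abacus configurations (pairs (lambda, s)).\<close>
definition abacus :: "(nat list \<times> int) set" where
  "abacus = {x. is_partition (fst x)}"

text \<open>A_e^m: m-tuples (lists of length m) of pairs (lambda^(k), s_k).\<close>
definition abacus_multi :: "nat \<Rightarrow> (nat list \<times> int) list set" where
  "abacus_multi m = {c. length c = m \<and> (\<forall>x\<in>set c. is_partition (fst x))}"

definition beta_inv :: "int set \<Rightarrow> nat list \<times> int" where
  "beta_inv B = (THE x. x \<in> abacus \<and> beta_set (snd x) (fst x) = B)"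

definition nodes :: "nat list \<Rightarrow> (nat \<times> nat) set" where
  "nodes la = {(x, y). 1 \<le> x \<and> 1 \<le> y \<and> y \<le> part la x}"

definition res1 :: "nat \<Rightarrow> nat list \<times> int \<Rightarrow> int multiset" where
  "res1 e x = image_mset (\<lambda>(a, b). (snd x + int b - int a) mod int e) (mset_set (nodes (fst x)))"

definition resm :: "nat \<Rightarrow> (nat list \<times> int) list \<Rightarrow> int multiset" where
  "resm e c = (\<Sum>k<length c. res1 e (c ! k))"

definition sizem :: "(nat list \<times> int) list \<Rightarrow> nat" where
  "sizem c = (\<Sum>k<length c. sum_list (fst (c ! k)))"

definition same_block :: "nat \<Rightarrow> (nat list \<times> int) list \<Rightarrow> (nat list \<times> int) list \<Rightarrow> bool" where
  "same_block e c d \<longleftrightarrow> map snd c = map snd d \<and> sizem c = sizem d \<and> resm e c = resm e d"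

definition blocks_multi :: "nat \<Rightarrow> nat \<Rightarrow> (nat list \<times> int) list set set" where
  "blocks_multi e m = {{d \<in> abacus_multi m. same_block e c d} | c. c \<in> abacus_multi m}"

definition same_block1 :: "nat \<Rightarrow> nat list \<times> int \<Rightarrow> nat list \<times> int \<Rightarrow> bool" where
  "same_block1 e x y \<longleftrightarrow> snd x = snd y \<and> sum_list (fst x) = sum_list (fst y) \<and> res1 e x = res1 e y"

definition blocks1 :: "nat \<Rightarrow> (nat list \<times> int) set set" where
  "blocks1 e = {{y \<in> abacus. same_block1 e x y} | x. x \<in> abacus}"

definition quot_beta :: "nat \<Rightarrow> int set \<Rightarrow> nat \<Rightarrow> int set" where
  "quot_beta e B i = {(b - int i) div int e | b. b \<in> B \<and> b mod int e = int i}"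

text \<open>eta(lambda, s) = ((rho_0,...,rho_{e-1}), (t_0,...,t_{e-1})), as a function of i < e.\<close>
definition eta :: "nat \<Rightarrow> nat list \<times> int \<Rightarrow> nat \<Rightarrow> nat list \<times> int" where
  "eta e x i = beta_inv (quot_beta e (beta_set (snd x) (fst x)) i)"

definition weight :: "nat \<Rightarrow> nat list \<times> int \<Rightarrow> nat" where
  "weight e x = (\<Sum>i<e. sum_list (fst (eta e x i)))"

definition r_rouquier :: "nat \<Rightarrow> nat \<Rightarrow> nat list \<times> int \<Rightarrow> bool" where
  "r_rouquier e r x \<longleftrightarrow>
     (\<forall>i. i + 1 < e \<longrightarrow> int (weight e x) \<le> snd (eta e x (Suc i)) - snd (eta e x i) + int r)"

definition rouquier :: "nat \<Rightarrow> nat list \<times> int \<Rightarrow> bool" where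
  "rouquier e x \<longleftrightarrow> (\<forall>i. i + 1 < e \<longrightarrow> int (weight e x) \<le> snd (eta e x (Suc i)) - snd (eta e x i) + 1)"

definition rouquier_multi :: "nat \<Rightarrow> (nat list \<times> int) list \<Rightarrow> bool" where
  "rouquier_multi e c \<longleftrightarrow> (\<forall>k<length c. rouquier e (c ! k))"

definition rouquier_block :: "nat \<Rightarrow> nat \<Rightarrow> (nat list \<times> int) list set \<Rightarrow> bool" where
  "rouquier_block e r Bl \<longleftrightarrow> Bl \<in> blocks_multi e r \<and> (\<forall>c\<in>Bl. rouquier_multi e c)"

definition r_rouquier_block :: "nat \<Rightarrow> nat \<Rightarrow> (nat list \<times> int) set \<Rightarrow> bool" where
  "r_rouquier_block e r Bl \<longleftrightarrow> Bl \<in> blocks1 e \<and> (\<forall>x\<in>Bl. r_rouquier e r x)"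

definition psi :: "nat \<Rightarrow> nat \<Rightarrow> nat \<Rightarrow> int \<Rightarrow> int" where
  "psi e r k b = ((b div int e + 1) * int r - int k) * int e + b mod int e"

text \<open>Component j of the list (0-based) is the k = j+1 component.\<close>
definition Psi :: "nat \<Rightarrow> nat \<Rightarrow> (nat list \<times> int) list \<Rightarrow> nat list \<times> int" where
  "Psi e r c = beta_inv (\<Union>j<length c. psi e r (Suc j) ` beta_set (snd (c ! j)) (fst (c ! j)))"

definition Phi :: "nat \<Rightarrow> nat \<Rightarrow> nat list \<times> int \<Rightarrow> (nat list \<times> int) list" where
  "Phi e r = inv_into (abacus_multi r) (Psi e r)"

end

theory Submission
  imports Defs
begin

text \<open>
  Measure a \<open>\<beta>\<close>-set \<open>B\<close> against the \<open>\<beta>\<close>-set \<open>{..<s}\<close> of the empty partition by the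
  relative sum \<open>\<Sum>\<^bsub>B - {..<s}\<^esub> G - \<Sum>\<^bsub>{..<s} - B\<^esub> G\<close>. For \<open>B = B\<^sub>s(\<lambda>)\<close> it vanishes for
  \<open>G = 1\<close>, it is \<open>|\<lambda>|\<close> for \<open>G = id\<close>, and it counts the nodes of residue \<open>j\<close> for
  \<open>G b = \<lfloor>(b - j) / e\<rfloor>\<close>. Each \<open>\<psi>\<^sub>k\<close> is affine on every residue class modulo \<open>e\<close>, so charge,
  size and residues of \<open>\<Psi>\<^sub>r(c)\<close> are those of \<open>\<Psi>\<^sub>r\<close> applied to the empty partitions with the
  charges of \<open>c\<close>, shifted by linear combinations of the block invariants of \<open>c\<close>. Hence \<open>\<Psi>\<^sub>r\<close>
  maps blocks into blocks, and \<open>\<Phi>\<^sub>r(R)\<close> is a union of blocks.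

  The \<open>e\<close>-quotients of \<open>\<Psi>\<^sub>r(c)\<close> are the images under Uglov's map for \<open>e = 1\<close> of the
  \<open>e\<close>-quotients of the components of \<open>c\<close>. Therefore the weight of \<open>\<Psi>\<^sub>r(c)\<close> is at least
  \<open>r\<close> times the weight of a component \<open>c\<^sub>j\<close> plus the sizes of the charge-only configurations on
  two adjacent runners. A \<open>\<beta>\<close>-set of charge \<open>t\<close> missing a position \<open>p\<close> has size at least
  \<open>t - p\<close>, and one containing \<open>p\<close> has size at least \<open>p + 1 - t\<close>; at the positions given by the
  quotient charges of \<open>c\<^sub>j\<close>, the \<open>r\<close>-Rouquier inequality for \<open>\<Psi>\<^sub>r(c)\<close> thus becomes \<open>r\<close> times
  the Rouquier inequality for \<open>c\<^sub>j\<close>, up to an error smaller than \<open>r\<close>.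
\<close>

section \<open>Relative sums\<close>

definition fin_diff :: "'a set \<Rightarrow> 'a set \<Rightarrow> bool" where
  "fin_diff X Y \<longleftrightarrow> finite (X - Y) \<and> finite (Y - X)"

definition diff_sum :: "('a \<Rightarrow> int) \<Rightarrow> 'a set \<Rightarrow> 'a set \<Rightarrow> int" where
  "diff_sum G X Y = sum G (X - Y) - sum G (Y - X)"

lemma fin_diff_sym: "fin_diff X Y \<Longrightarrow> fin_diff Y X"
  by (auto simp: fin_diff_def)

lemma fin_diff_trans:
  assumes "fin_diff X Y" "fin_diff Y Z"
  shows "fin_diff X Z"
proof -
  have "X - Z \<subseteq> (X - Y) \<union> (Y - Z)" "Z - X \<subseteq> (Z - Y) \<union> (Y - X)" by auto
  thus ?thesis using assms unfolding fin_diff_def by (meson finite_Un finite_subset)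
qed

lemma diff_sum_window:
  assumes "finite W" "X - Y \<subseteq> W" "Y - X \<subseteq> W"
  shows "diff_sum G X Y = sum G (X \<inter> W) - sum G (Y \<inter> W)"
proof -
  have fin: "finite (X \<inter> Y \<inter> W)" "finite (X - Y)" "finite (Y - X)"
    using assms finite_subset by auto
  have "X \<inter> W = (X - Y) \<union> (X \<inter> Y \<inter> W)" "Y \<inter> W = (Y - X) \<union> (X \<inter> Y \<inter> W)"
    using assms by auto
  hence "sum G (X \<inter> W) = sum G (X - Y) + sum G (X \<inter> Y \<inter> W)"
    "sum G (Y \<inter> W) = sum G (Y - X) + sum G (X \<inter> Y \<inter> W)"
    by (simp_all only:) (rule sum.union_disjoint; use fin in auto)+
  thus ?thesis by (simp add: diff_sum_def)
qed

lemma diff_sum_trans: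
  assumes "fin_diff X Y" "fin_diff Y Z"
  shows "diff_sum G X Z = diff_sum G X Y + diff_sum G Y Z"
proof -
  define W where "W = (X - Y) \<union> (Y - X) \<union> (Y - Z) \<union> (Z - Y)"
  have "finite W" using assms by (auto simp: W_def fin_diff_def)
  thus ?thesis by (subst (1 2 3) diff_sum_window[where W = W]) (auto simp: W_def)
qed

lemma diff_sum_swap: "diff_sum G Y X = - diff_sum G X Y"
  by (simp add: diff_sum_def)

lemma diff_sum_finite: "finite X \<Longrightarrow> finite Y \<Longrightarrow> diff_sum G X Y = sum G X - sum G Y"
  by (subst diff_sum_window[where W = "X \<union> Y"]) (auto simp: Int_absorb2)

lemma diff_sum_add: "diff_sum (\<lambda>x. G x + H x) X Y = diff_sum G X Y + diff_sum H X Y"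
  by (simp add: diff_sum_def sum.distrib)

lemma diff_sum_cmult: "diff_sum (\<lambda>x. c * G x) X Y = c * diff_sum G X Y"
  by (simp add: diff_sum_def sum_distrib_left algebra_simps)

lemma diff_sum_Un_disjoint:
  assumes "X \<inter> T = {}" "Y \<inter> T = {}"
  shows "diff_sum G (X \<union> T) (Y \<union> T) = diff_sum G X Y" "fin_diff (X \<union> T) (Y \<union> T) = fin_diff X Y"
proof -
  have "(X \<union> T) - (Y \<union> T) = X - Y" "(Y \<union> T) - (X \<union> T) = Y - X" using assms by auto
  thus "diff_sum G (X \<union> T) (Y \<union> T) = diff_sum G X Y" "fin_diff (X \<union> T) (Y \<union> T) = fin_diff X Y"
    by (simp_all add: diff_sum_def fin_diff_def)
qed

lemma UN_image_diff_disjoint_ranges: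
  assumes inj: "\<forall>j\<in>J. inj (f j)"
    and disj: "\<forall>j\<in>J. \<forall>j'\<in>J. j \<noteq> j' \<longrightarrow> range (f j) \<inter> range (f j') = {}"
  shows "(\<Union>j\<in>J. f j ` A j) - (\<Union>j\<in>J. f j ` A' j) = (\<Union>j\<in>J. f j ` (A j - A' j))"
proof -
  have notin: "f j a \<notin> f j' ` A' j'" if j: "j \<in> J" "j' \<in> J" "a \<notin> A' j" for j j' a
  proof
    assume "f j a \<in> f j' ` A' j'"
    then obtain b where b: "b \<in> A' j'" "f j a = f j' b" by auto
    have "f j a \<in> range (f j')" unfolding b(2) by (rule rangeI)
    hence "f j a \<in> range (f j) \<inter> range (f j')" by simp
    hence "j = j'" using disj j by blast
    hence "a = b" using inj j b by (auto simp: inj_def)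
    thus False using j b \<open>j = j'\<close> by simp
  qed
  show ?thesis
  proof (intro equalityI subsetI)
    fix x assume "x \<in> (\<Union>j\<in>J. f j ` A j) - (\<Union>j\<in>J. f j ` A' j)"
    then obtain j a where "j \<in> J" "a \<in> A j" "x = f j a" "x \<notin> (\<Union>j\<in>J. f j ` A' j)" by auto
    thus "x \<in> (\<Union>j\<in>J. f j ` (A j - A' j))" by auto
  next
    fix x assume "x \<in> (\<Union>j\<in>J. f j ` (A j - A' j))"
    then obtain j a where x: "j \<in> J" "a \<in> A j" "a \<notin> A' j" "x = f j a" by auto
    hence "x \<notin> f j' ` A' j'" if "j' \<in> J" for j' using notin that by simp
    thus "x \<in> (\<Union>j\<in>J. f j ` A j) - (\<Union>j\<in>J. f j ` A' j)" using x by blast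
  qed
qed

lemma
  assumes J: "finite J" and inj: "\<forall>j\<in>J. inj (f j)"
    and disj: "\<forall>j\<in>J. \<forall>j'\<in>J. j \<noteq> j' \<longrightarrow> range (f j) \<inter> range (f j') = {}"
    and fin: "\<forall>j\<in>J. fin_diff (A j) (A' j)"
  shows diff_sum_UN_image:
      "diff_sum G (\<Union>j\<in>J. f j ` A j) (\<Union>j\<in>J. f j ` A' j) = (\<Sum>j\<in>J. diff_sum (G \<circ> f j) (A j) (A' j))"
    and fin_diff_UN_image: "fin_diff (\<Union>j\<in>J. f j ` A j) (\<Union>j\<in>J. f j ` A' j)"
proof -
  note diff = UN_image_diff_disjoint_ranges[OF inj disj]
  have fin': "\<forall>j\<in>J. finite (f j ` (A j - A' j))" "\<forall>j\<in>J. finite (f j ` (A' j - A j))"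
    using fin by (auto simp: fin_diff_def)
  have disj': "\<forall>j\<in>J. \<forall>j'\<in>J. j \<noteq> j' \<longrightarrow> f j ` X j \<inter> f j' ` Y j' = {}" for X Y
    using disj by blast
  have reindex: "sum G (f j ` X) = sum (G \<circ> f j) X" if "j \<in> J" for j X
    using inj that by (simp add: sum.reindex inj_on_def inj_def)
  show "diff_sum G (\<Union>j\<in>J. f j ` A j) (\<Union>j\<in>J. f j ` A' j) = (\<Sum>j\<in>J. diff_sum (G \<circ> f j) (A j) (A' j))"
    unfolding diff_sum_def diff sum.UNION_disjoint[OF J fin'(1) disj'] sum.UNION_disjoint[OF J fin'(2) disj']
    by (simp add: reindex sum_subtractf)
  show "fin_diff (\<Union>j\<in>J. f j ` A j) (\<Union>j\<in>J. f j ` A' j)"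
    unfolding fin_diff_def diff using J fin' by auto
qed

lemma diff_sum_one_lessThan: "diff_sum (\<lambda>_. 1) {..<a} {..<b} = a - b"
proof (cases "b \<le> a")
  case True
  hence "{..<a} - {..<b} = {b..<a}" "{..<b} - {..<a} = {}" by auto
  thus ?thesis using True by (simp add: diff_sum_def)
next
  case False
  hence "{..<b} - {..<a} = {a..<b}" "{..<a} - {..<b} = {}" by auto
  thus ?thesis using False by (simp add: diff_sum_def)
qed

lemma fin_diff_lessThan: "fin_diff {..<a} {..<b :: int}"
proof -
  have "{..<a} - {..<b} \<subseteq> {b..<a}" "{..<b} - {..<a} \<subseteq> {a..<b}" by auto
  thus ?thesis unfolding fin_diff_def by (meson finite_atLeastLessThan_int finite_subset)
qed

section \<open>Partitions as \<open>\<beta>\<close>-sets\<close>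

abbreviation beta_of :: "nat list \<times> int \<Rightarrow> int set" where
  "beta_of x \<equiv> beta_set (snd x) (fst x)"

definition bead :: "int \<Rightarrow> nat list \<Rightarrow> nat \<Rightarrow> int" where
  "bead s la i = int (part la i) - int i + s"

lemma part_mono:
  assumes "is_partition la" "1 \<le> i" "i \<le> j"
  shows "part la j \<le> part la i"
proof (cases "j \<le> length la")
  case True
  have "sorted_wrt (\<ge>) la" using assms(1) by (simp add: is_partition_def)
  hence "la ! (j - 1) \<le> la ! (i - 1)"
    using assms True by (cases "i = j") (auto simp: sorted_wrt_iff_nth_less)
  thus ?thesis using assms True by (simp add: part_def)
next
  case False
  thus ?thesis by (simp add: part_def)
qed

lemma part_pos:
  assumes "is_partition la" "1 \<le> i" "i \<le> length la"
  shows "part la i \<ge> 1"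
proof -
  have "la ! (i - 1) \<in> set la" using assms by auto
  hence "la ! (i - 1) \<noteq> 0" using assms(1) by (metis is_partition_def)
  thus ?thesis using assms by (simp add: part_def)
qed

lemma bead_less:
  assumes "is_partition la" "1 \<le> i" "i < j"
  shows "bead s la j < bead s la i"
  using part_mono[OF assms(1,2), of j] assms(3) by (simp add: bead_def)

lemma bead_ge: "bead s la i \<ge> s - int i" by (simp add: bead_def)

lemma beta_set_bead_image: "beta_set s la = bead s la ` {i. 1 \<le> i}"
  by (auto simp: beta_set_def bead_def)

lemma beta_set_split:
  assumes "is_partition la"
  shows "beta_set s la = bead s la ` {1..length la} \<union> {..< s - int (length la)}"
proof
  show "beta_set s la \<subseteq> bead s la ` {1..length la} \<union> {..< s - int (length la)}"
  proof
    fix y assume "y \<in> beta_set s la"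
    then obtain i where i: "1 \<le> i" "y = bead s la i" by (auto simp: beta_set_bead_image)
    show "y \<in> bead s la ` {1..length la} \<union> {..< s - int (length la)}"
    proof (cases "i \<le> length la")
      case True thus ?thesis using i by auto
    next
      case False thus ?thesis using i by (auto simp: bead_def part_def)
    qed
  qed
  show "bead s la ` {1..length la} \<union> {..< s - int (length la)} \<subseteq> beta_set s la"
  proof
    fix y assume y: "y \<in> bead s la ` {1..length la} \<union> {..< s - int (length la)}"
    show "y \<in> beta_set s la"
    proof (cases "y < s - int (length la)")
      case True
      define i where "i = nat (s - y)"
      have "i > length la" "int i = s - y" using True by (auto simp: i_def)
      hence "bead s la i = y" by (simp add: bead_def part_def)
      thus ?thesis using \<open>i > length la\<close> by (auto simp: beta_set_bead_image)
    next
      case False thus ?thesis using y by (auto simp: beta_set_bead_image)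
    qed
  qed
qed

lemma lessThan_split:
  "{..<s} = (\<lambda>i. s - int i) ` {1..M} \<union> {..< s - int M}"
proof -
  have *: "y \<in> (\<lambda>i. s - int i) ` {1..M}" if "s - int M \<le> y" "y < s" for y
    using that by (intro image_eqI[where x="nat (s - y)"]) auto
  show ?thesis
  proof (rule set_eqI)
    fix y show "y \<in> {..<s} \<longleftrightarrow> y \<in> (\<lambda>i. s - int i) ` {1..M} \<union> {..< s - int M}"
      using *[of y] by (cases "y < s - int M") auto
  qed
qed

lemma
  assumes "is_partition la"
  shows diff_sum_beta_set_lessThan:
      "diff_sum G (beta_set s la) {..<s} = (\<Sum>i=1..length la. G (bead s la i) - G (s - int i))"
    and fin_diff_beta_set_lessThan: "fin_diff (beta_set s la) {..<s}"
proof -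
  let ?M = "length la"
  have d1: "bead s la ` {1..?M} \<inter> {..< s - int ?M} = {}"
  proof -
    have "bead s la i \<ge> s - int ?M" if "i \<in> {1..?M}" for i
      using bead_ge[where s = s and la = la and i = i] that by auto
    thus ?thesis by force
  qed
  have d2: "(\<lambda>i. s - int i) ` {1..?M} \<inter> {..< s - int ?M} = {}" by auto
  have inj1: "inj_on (bead s la) {1..?M}"
    by (rule inj_onI) (metis atLeastAtMost_iff bead_less[OF assms] linorder_neqE_nat less_irrefl)
  have inj2: "inj_on (\<lambda>i. s - int i) {1..?M}" by (auto simp: inj_on_def)
  have "diff_sum G (beta_set s la) {..<s} = diff_sum G (bead s la ` {1..?M}) ((\<lambda>i. s - int i) ` {1..?M})"
    unfolding beta_set_split[OF assms]
    by (subst lessThan_split[of s ?M]) (rule diff_sum_Un_disjoint(1)[OF d1 d2])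
  also have "\<dots> = sum G (bead s la ` {1..?M}) - sum G ((\<lambda>i. s - int i) ` {1..?M})"
    by (rule diff_sum_finite) auto
  also have "\<dots> = (\<Sum>i=1..?M. G (bead s la i) - G (s - int i))"
    by (simp only: sum.reindex[OF inj1] sum.reindex[OF inj2] sum_subtractf comp_def)
  finally show "diff_sum G (beta_set s la) {..<s} = (\<Sum>i=1..length la. G (bead s la i) - G (s - int i))" .
  have "fin_diff (bead s la ` {1..?M}) ((\<lambda>i. s - int i) ` {1..?M})" by (simp add: fin_diff_def)
  thus "fin_diff (beta_set s la) {..<s}"
    unfolding beta_set_split[OF assms]
    by (subst lessThan_split[of s ?M]) (simp only: diff_sum_Un_disjoint(2)[OF d1 d2])
qed

lemma sum_list_part: "(\<Sum>i=1..length la. part la i) = sum_list la"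
proof -
  have "(\<Sum>i=1..length la. part la i) = (\<Sum>i<length la. la ! i)"
    by (rule sum.reindex_bij_witness[where i="\<lambda>i. i + 1" and j="\<lambda>i. i - 1"]) (auto simp: part_def)
  thus ?thesis by (simp add: sum_list_sum_nth atLeast0LessThan)
qed

lemma diff_sum_id_beta_set:
  assumes "is_partition la"
  shows "diff_sum (\<lambda>b. b) (beta_set s la) {..<s} = int (sum_list la)"
  unfolding diff_sum_beta_set_lessThan[OF assms] bead_def
  by (simp add: sum_list_part[symmetric])

lemma diff_sum_one_beta_set:
  assumes "is_partition la"
  shows "diff_sum (\<lambda>_. 1) (beta_set s la) {..<s} = 0"
  unfolding diff_sum_beta_set_lessThan[OF assms] by simp

lemma
  assumes "is_partition la" "is_partition la'"
  shows fin_diff_beta_set: "fin_diff (beta_set s la) (beta_set s' la')"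
    and diff_sum_beta_set: "diff_sum G (beta_set s la) (beta_set s' la')
      = diff_sum G (beta_set s la) {..<s} + diff_sum G {..<s} {..<s'} - diff_sum G (beta_set s' la') {..<s'}"
proof -
  have fin: "fin_diff (beta_set s la) {..<s}" "fin_diff {..<s'} (beta_set s' la')"
    using fin_diff_beta_set_lessThan assms fin_diff_sym by blast+
  have fin': "fin_diff {..<s} (beta_set s' la')"
    using fin_diff_trans[OF fin_diff_lessThan fin(2)] .
  show "fin_diff (beta_set s la) (beta_set s' la')" using fin_diff_trans[OF fin(1) fin'] .
  show "diff_sum G (beta_set s la) (beta_set s' la')
      = diff_sum G (beta_set s la) {..<s} + diff_sum G {..<s} {..<s'} - diff_sum G (beta_set s' la') {..<s'}"
    using diff_sum_trans[OF fin(1) fin', of G] diff_sum_trans[OF fin_diff_lessThan[of s] fin(2), of G]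
      diff_sum_swap[of G "{..<s'}" "beta_set s' la'"] by linarith
qed

lemma diff_sum_one_beta_set_charge:
  assumes "is_partition la" "is_partition la'"
  shows "diff_sum (\<lambda>_. 1) (beta_set s la) (beta_set s' la') = s - s'"
  by (simp add: diff_sum_beta_set[OF assms] diff_sum_one_beta_set assms diff_sum_one_lessThan)

lemma add_one_div:
  assumes "(e::int) > 0"
  shows "(x + 1) div e = x div e + (if (x + 1) mod e = 0 then 1 else 0)"
proof (cases "x mod e + 1 = e")
  case True
  have "x + 1 = e * (x div e) + (x mod e + 1)" by simp
  also have "\<dots> = (x div e + 1) * e" using True by (simp add: algebra_simps)
  finally have "x + 1 = (x div e + 1) * e" .
  thus ?thesis using assms by simp
next
  case False
  have r: "0 \<le> x mod e" "x mod e < e" using assms by auto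
  hence "x mod e + 1 < e" using False by auto
  hence mod: "(x + 1) mod e = x mod e + 1" using r by (smt (verit) mod_add_right_eq zmod_trivial_iff)
  hence "(x + 1) div e = x div e" by (smt (verit) minus_mod_eq_mult_div mult_left_cancel assms)
  thus ?thesis using mod r by simp
qed

lemma diff_mod_eq_0_iff:
  assumes "(e::int) > 0" "0 \<le> j" "j < e" shows "((y - j) mod e = 0) = (y mod e = j)"
  using assms by (smt (verit, ccfv_SIG) mod_diff_eq mod_pos_pos_trivial)

definition level :: "nat \<Rightarrow> int \<Rightarrow> int \<Rightarrow> int" where
  "level e j b = (b - j) div int e"

lemma card_residue_level:
  assumes e: "e > 0" and j: "0 \<le> j" "j < int e"
  shows "int (card {b \<in> {1..n}. (c + int b) mod int e = j}) = level e j (c + int n) - level e j c"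
proof (induction n)
  case 0 thus ?case by simp
next
  case (Suc n)
  let ?P = "\<lambda>b. (c + int b) mod int e = j"
  have set: "{b \<in> {1..Suc n}. ?P b} = {b \<in> {1..n}. ?P b} \<union> (if ?P (Suc n) then {Suc n} else {})"
    by (auto simp: le_Suc_eq)
  have card: "card {b \<in> {1..Suc n}. ?P b} = card {b \<in> {1..n}. ?P b} + (if ?P (Suc n) then 1 else 0)"
    unfolding set by (auto simp: card_insert_if)
  have "level e j (c + int (Suc n)) = level e j (c + int n) + (if (c + int n - j + 1) mod int e = 0 then 1 else 0)"
    using add_one_div[of "int e" "c + int n - j"] e by (simp add: level_def algebra_simps)
  moreover have "((c + int n - j + 1) mod int e = 0) = ?P (Suc n)"
    using diff_mod_eq_0_iff[of "int e" j "c + int n + 1"] e j by (simp add: algebra_simps)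
  ultimately show ?case using Suc card by simp
qed

lemma count_image_mset_set:
  "finite N \<Longrightarrow> count (image_mset f (mset_set N)) j = card {x \<in> N. f x = j}"
  by (simp add: count_image_mset Int_def conj_commute)

lemma nodes_Sigma:
  assumes "is_partition la"
  shows "{x \<in> nodes la. P x} = Sigma {1..length la} (\<lambda>a. {b \<in> {1..part la a}. P (a, b)})"
proof -
  have "a \<le> length la" if "1 \<le> b" "b \<le> part la a" for a b
    using that by (cases "a \<le> length la") (auto simp: part_def)
  thus ?thesis by (auto simp: nodes_def)
qed

lemma count_res1_diff_sum:
  assumes e: "e > 0" and j: "0 \<le> j" "j < int e" and x: "x \<in> abacus"
  shows "int (count (res1 e x) j) = diff_sum (level e j) (beta_of x) {..<snd x}"
proof -
  obtain la s where xs: "x = (la, s)" by (cases x)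
  have la: "is_partition la" using x xs by (simp add: abacus_def)
  let ?M = "length la"
  have fin: "finite (nodes la)"
    using nodes_Sigma[OF la, of "\<lambda>_. True"] by simp
  have "count (res1 e (la, s)) j = card {x \<in> nodes la. (\<lambda>(a, b). (s + int b - int a) mod int e) x = j}"
    unfolding res1_def by (simp add: count_image_mset_set[OF fin])
  also have "\<dots> = card (Sigma {1..?M} (\<lambda>a. {b \<in> {1..part la a}. (s + int b - int a) mod int e = j}))"
    by (subst nodes_Sigma[OF la]) simp
  also have "\<dots> = (\<Sum>a=1..?M. card {b \<in> {1..part la a}. (s - int a + int b) mod int e = j})"
    by (simp add: algebra_simps)
  finally have "int (count (res1 e (la, s)) j) = (\<Sum>a=1..?M. int (card {b \<in> {1..part la a}. (s - int a + int b) mod int e = j}))"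
    by simp
  also have "\<dots> = (\<Sum>a=1..?M. level e j (bead s la a) - level e j (s - int a))"
    by (rule sum.cong[OF refl], subst card_residue_level[OF e j], simp add: bead_def algebra_simps)
  also have "\<dots> = diff_sum (level e j) (beta_set s la) {..<s}"
    by (simp add: diff_sum_beta_set_lessThan[OF la])
  finally show ?thesis using xs by simp
qed

lemma res1_range:
  assumes "e > 0"
  shows "set_mset (res1 e x) \<subseteq> {0..<int e}"
  using assms by (auto simp: res1_def)

section \<open>Recovering a configuration from its \<open>\<beta>\<close>-set\<close>

definition is_beta :: "int set \<Rightarrow> bool" where
  "is_beta B \<longleftrightarrow> fin_diff B {..<0}"

lemma is_beta_beta_set: "is_partition la \<Longrightarrow> is_beta (beta_set s la)"
  unfolding is_beta_def using fin_diff_beta_set_lessThan fin_diff_trans fin_diff_lessThan by blast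

lemma strict_dec_less: "(\<forall>n. f (Suc n) < (f n :: int)) \<Longrightarrow> m < n \<Longrightarrow> f n < f m"
proof (induction n)
  case 0 thus ?case by simp
next
  case (Suc n) thus ?case by (metis less_Suc_eq order.strict_trans)
qed

lemma strict_dec_range_eq:
  fixes f g :: "nat \<Rightarrow> int"
  assumes f: "\<forall>n. f (Suc n) < f n" and g: "\<forall>n. g (Suc n) < g n" and r: "range f = range g"
  shows "f = g"
proof
  fix n show "f n = g n"
  proof (induction n rule: less_induct)
    case (less n)
    obtain k where k: "f n = g k" using r by (metis rangeE rangeI)
    obtain k' where k': "g n = f k'" using r by (metis rangeE rangeI)
    have "\<not> k < n"
    proof
      assume "k < n" hence "g k = f k" using less by simp
      hence "f n = f k" using k by simp
      thus False using strict_dec_less[OF f \<open>k < n\<close>] by simp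
    qed
    hence "g k \<le> g n" using strict_dec_less[OF g] by (cases "k = n") (auto simp: not_less order.order_iff_strict)
    have "\<not> k' < n"
    proof
      assume "k' < n" hence "g k' = f k'" using less by simp
      hence "g n = g k'" using k' by simp
      thus False using strict_dec_less[OF g \<open>k' < n\<close>] by simp
    qed
    hence "f k' \<le> f n" using strict_dec_less[OF f] by (cases "k' = n") (auto simp: not_less order.order_iff_strict)
    show ?case using k k' \<open>g k \<le> g n\<close> \<open>f k' \<le> f n\<close> by simp
  qed
qed

lemma partition_eqI:
  assumes la: "is_partition la" and la': "is_partition la'" and p: "\<forall>i\<ge>1. part la i = part la' i"
  shows "la = la'"
proof -
  have l1: "\<not> length la < length la'"
  proof
    assume a: "length la < length la'"
    have "part la' (length la') \<ge> 1" using part_pos[OF la'] a by simp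
    moreover have "part la (length la') = 0" using a by (simp add: part_def)
    moreover have "part la (length la') = part la' (length la')" using p a by simp
    ultimately show False by simp
  qed
  have l2: "\<not> length la' < length la"
  proof
    assume a: "length la' < length la"
    have "part la (length la) \<ge> 1" using part_pos[OF la] a by simp
    moreover have "part la' (length la) = 0" using a by (simp add: part_def)
    moreover have "part la (length la) = part la' (length la)" using p a by simp
    ultimately show False by simp
  qed
  have len: "length la = length la'" using l1 l2 by simp
  show ?thesis
  proof (rule nth_equalityI[OF len])
    fix i assume "i < length la"
    thus "la ! i = la' ! i" using p[rule_format, of "Suc i"] len by (simp add: part_def)
  qed
qed

lemma beta_set_inj:
  assumes la: "is_partition la" and la': "is_partition la'" and eq: "beta_set s la = beta_set s' la'"
  shows "s = s' \<and> la = la'"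
proof -
  have s: "s = s'" using diff_sum_one_beta_set_charge[OF la la', of s s'] eq by (simp add: diff_sum_def)
  define f where "f n = bead s la (Suc n)" for n
  define g where "g n = bead s la' (Suc n)" for n
  have rf: "range f = beta_set s la" unfolding f_def beta_set_bead_image
    by (auto simp: image_iff) (metis Suc_le_D)
  have rg: "range g = beta_set s la'" unfolding g_def beta_set_bead_image
    by (auto simp: image_iff) (metis Suc_le_D)
  have "range f = range g" using rf rg eq s by simp
  have "f = g"
    by (rule strict_dec_range_eq[OF _ _ \<open>range f = range g\<close>]) (simp_all add: f_def g_def bead_less[OF la] bead_less[OF la'])
  have "\<forall>i\<ge>1. part la i = part la' i"
  proof (intro allI impI)
    fix i :: nat assume "1 \<le> i"
    hence "Suc (i - 1) = i" by simp
    moreover have "f (i - 1) = g (i - 1)" using \<open>f = g\<close> by simp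
    ultimately have "bead s la i = bead s la' i" by (simp add: f_def g_def)
    thus "part la i = part la' i" by (simp add: bead_def)
  qed
  thus ?thesis using s partition_eqI[OF la la'] by simp
qed

lemma sorted_wrt_greater_nth_add:
  fixes bs :: "int list"
  assumes "sorted_wrt (>) bs" "i + d < length bs"
  shows "bs ! (i + d) + int d \<le> bs ! i"
  using assms(2)
proof (induction d)
  case 0 thus ?case by simp
next
  case (Suc d)
  have "bs ! (i + Suc d) < bs ! (i + d)"
    using assms(1) Suc.prems by (simp add: sorted_wrt_iff_nth_less)
  thus ?case using Suc by simp
qed

lemma is_beta_gap:
  assumes "is_beta B"
  obtains L where "finite (B \<inter> {L<..})" "B = B \<inter> {L<..} \<union> {..<L}"
proof -
  have fin_neg: "finite ({..<0} - B)" and fin_pos: "finite (B - {..<0})"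
    using assms by (auto simp: is_beta_def fin_diff_def)
  have "\<not> {0::int..} \<subseteq> B - {..<0}" using infinite_Ici[of "0::int"] fin_pos finite_subset by blast
  then obtain c where c: "c \<notin> B" by auto
  define C where "C = {b. b \<le> c \<and> b \<notin> B}"
  have "C \<subseteq> ({..<0} - B) \<union> {0..c}" by (auto simp: C_def)
  hence "finite C" using fin_neg by (meson finite_UnI finite_atLeastAtMost_int finite_subset)
  moreover have "c \<in> C" using c by (simp add: C_def)
  ultimately have C: "finite C" "C \<noteq> {}" by auto
  define L where "L = Min C"
  have "L \<in> C" using Min_in[OF C] by (simp add: L_def)
  hence L: "L \<notin> B" by (simp add: C_def)
  have below: "b \<in> B" if "b < L" for b
  proof (rule ccontr)
    assume "b \<notin> B"
    hence "b \<in> C" using that \<open>L \<in> C\<close> by (simp add: C_def)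
    hence "L \<le> b" using Min_le[OF C(1)] by (simp add: L_def)
    thus False using that by simp
  qed
  have "B \<inter> {L<..} \<subseteq> (B - {..<0}) \<union> {L<..<0}" by auto
  hence "finite (B \<inter> {L<..})"
    using fin_pos by (meson finite_UnI finite_greaterThanLessThan_int finite_subset)
  moreover have "B = B \<inter> {L<..} \<union> {..<L}"
    using L below by (auto simp: not_less_iff_gr_or_eq)
  ultimately show ?thesis by (rule that)
qed

lemma
  fixes bs :: "int list"
  assumes dec: "sorted_wrt (>) bs" and above: "\<forall>b\<in>set bs. L < b"
  defines "la \<equiv> map (\<lambda>i. nat (bs ! i + int i + 1 - (L + int (length bs)))) [0..<length bs]"
  shows is_partition_of_sorted_greater: "is_partition la"
    and bead_image_of_sorted_greater: "bead (L + int (length bs)) la ` {1..length bs} = set bs"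
proof -
  let ?m = "length bs"
  define s where "s = L + int ?m"
  have low: "bs ! i \<ge> L + 1 + int (?m - 1 - i)" if "i < ?m" for i
  proof -
    have "bs ! (?m - 1) \<ge> L + 1" using above that nth_mem[of "?m - 1" bs] by fastforce
    moreover have "bs ! (i + (?m - 1 - i)) + int (?m - 1 - i) \<le> bs ! i"
      by (rule sorted_wrt_greater_nth_add[OF dec]) (use that in simp)
    ultimately show ?thesis using that by simp
  qed
  have la: "int (la ! i) = bs ! i + int i + 1 - s" "la ! i \<ge> 1" if "i < ?m" for i
    using low[OF that] that by (auto simp: la_def s_def)
  show "is_partition la"
    unfolding is_partition_def
  proof
    show "sorted_wrt (\<ge>) la"
    proof (subst sorted_wrt_iff_nth_less, intro allI impI)
      fix i j assume ij: "i < j" "j < length la"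
      have "bs ! (i + (j - i)) + int (j - i) \<le> bs ! i"
        by (rule sorted_wrt_greater_nth_add[OF dec]) (use ij in \<open>simp add: la_def\<close>)
      hence "int (la ! j) \<le> int (la ! i)" using la ij by (simp add: la_def)
      thus "la ! j \<le> la ! i" by simp
    qed
    show "0 \<notin> set la" using la(2) by (fastforce simp: in_set_conv_nth la_def)
  qed
  have "bead s la (Suc i) = bs ! i" if "i < ?m" for i
    using la[OF that] that by (simp add: bead_def part_def la_def)
  hence "bead s la ` {1..?m} = (!) bs ` {..<?m}"
    unfolding image_Suc_lessThan[symmetric] image_image by (intro image_cong) auto
  also have "\<dots> = set bs" by (simp add: atLeast0LessThan[symmetric] nth_image)
  finally show "bead (L + int ?m) la ` {1..?m} = set bs" by (simp add: s_def)
qed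

lemma beta_set_finite_Un_lessThan:
  assumes fin: "finite F" and above: "F \<subseteq> {L<..}"
  shows "\<exists>la s. is_partition la \<and> beta_set s la = F \<union> {..<L}"
proof -
  define bs where "bs = rev (sorted_list_of_set F)"
  have bs: "sorted_wrt (>) bs" "\<forall>b\<in>set bs. L < b" "set bs = F"
    using strict_sorted_list_of_set[of F] fin above by (auto simp: bs_def sorted_wrt_rev)
  define s where "s = L + int (length bs)"
  define la where "la = map (\<lambda>i. nat (bs ! i + int i + 1 - s)) [0..<length bs]"
  have la: "is_partition la" "length la = length bs" "bead s la ` {1..length la} = F"
    using is_partition_of_sorted_greater[OF bs(1,2)] bead_image_of_sorted_greater[OF bs(1,2)] bs(3)
    by (simp_all add: la_def s_def)
  have "beta_set s la = F \<union> {..<L}"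
    using la(2,3) by (simp add: beta_set_split[OF la(1)] s_def)
  thus ?thesis using la by blast
qed

lemma beta_exists:
  assumes "is_beta B"
  shows "\<exists>la s. is_partition la \<and> beta_set s la = B"
proof -
  obtain L where L: "finite (B \<inter> {L<..})" "B = B \<inter> {L<..} \<union> {..<L}"
    using is_beta_gap[OF assms] .
  from beta_set_finite_Un_lessThan[OF L(1) Int_lower2] obtain la s
    where la: "is_partition la" and eq: "beta_set s la = B \<inter> {L<..} \<union> {..<L}" by blast
  have "beta_set s la = B" using eq L(2)[symmetric] by (rule trans)
  thus ?thesis using la by blast
qed

lemma beta_ex1: "is_beta B \<Longrightarrow> \<exists>!x. x \<in> abacus \<and> beta_of x = B"
proof -
  assume "is_beta B"
  then obtain la s where "is_partition la" "beta_set s la = B" using beta_exists by blast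
  hence ex: "(la, s) \<in> abacus \<and> beta_of (la, s) = B" by (simp add: abacus_def)
  show ?thesis
  proof (rule ex1I[where a="(la, s)"])
    show "(la, s) \<in> abacus \<and> beta_of (la, s) = B" using ex .
    fix y assume "y \<in> abacus \<and> beta_of y = B"
    thus "y = (la, s)" using beta_set_inj ex by (cases y) (auto simp: abacus_def)
  qed
qed

lemma
  assumes "is_beta B"
  shows beta_inv_in_abacus: "beta_inv B \<in> abacus"
    and beta_of_beta_inv: "beta_of (beta_inv B) = B"
  using theI'[OF beta_ex1[OF assms]] unfolding beta_inv_def by auto

lemma beta_inv_eq:
  assumes "x \<in> abacus"
  shows "beta_inv (beta_of x) = x"
proof -
  have "is_beta (beta_of x)" using assms is_beta_beta_set by (auto simp: abacus_def)
  thus ?thesis unfolding beta_inv_def using assms by (intro the1_equality beta_ex1) auto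
qed

section \<open>Uglov's map\<close>

lemma mult_eq_zero_of_abs_less:
  fixes a r :: int
  assumes "r > 0" "\<bar>a * r\<bar> < r" shows "a = 0"
proof (rule ccontr)
  assume "a \<noteq> 0"
  hence "\<bar>a\<bar> * r \<ge> 1 * r" using assms(1) by (intro mult_right_mono) auto
  thus False using assms by (simp add: abs_mult)
qed

lemma psi_div_mod:
  assumes "e > 0"
  shows "psi e r k b div int e = (b div int e + 1) * int r - int k"
    and "psi e r k b mod int e = b mod int e"
proof -
  have "psi e r k b = b mod int e + int e * ((b div int e + 1) * int r - int k)"
    by (simp add: psi_def algebra_simps)
  thus "psi e r k b div int e = (b div int e + 1) * int r - int k"
    "psi e r k b mod int e = b mod int e" using assms by simp_all
qed

lemma psi_eq_add_mult:
  "psi e r k b = b + int e * ((int r - 1) * (b div int e) + (int r - int k))"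
proof -
  have "psi e r k b = (int e * (b div int e) + b mod int e)
      + int e * ((int r - 1) * (b div int e) + (int r - int k))"
    by (simp add: psi_def algebra_simps)
  thus ?thesis by simp
qed

lemma psi_one: "psi (Suc 0) r k a = (a + 1) * int r - int k"
  by (simp add: psi_def)

lemma inj_psi:
  assumes "e > 0" "r > 0" shows "inj (psi e r k)"
proof (rule injI)
  fix x y assume eq: "psi e r k x = psi e r k y"
  have "x div int e = y div int e"
    using psi_div_mod(1)[OF assms(1), of r k x] psi_div_mod(1)[OF assms(1), of r k y] eq assms(2) by simp
  moreover have "x mod int e = y mod int e"
    using psi_div_mod(2)[OF assms(1), of r k x] psi_div_mod(2)[OF assms(1), of r k y] eq by simp
  ultimately show "x = y" by (metis div_mult_mod_eq)
qed

lemma psi_ranges_disjoint: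
  assumes "e > 0" "1 \<le> k" "k \<le> r" "1 \<le> k'" "k' \<le> r" "k \<noteq> k'"
  shows "range (psi e r k) \<inter> range (psi e r k') = {}"
proof (rule ccontr)
  assume "range (psi e r k) \<inter> range (psi e r k') \<noteq> {}"
  then obtain x y where "psi e r k x = psi e r k' y" by auto
  hence eq: "(x div int e - y div int e) * int r = int k - int k'"
    using psi_div_mod(1)[OF assms(1), of r k x] psi_div_mod(1)[OF assms(1), of r k' y]
    by (simp add: algebra_simps)
  moreover have "\<bar>int k - int k'\<bar> < int r" using assms by auto
  ultimately have "\<bar>(x div int e - y div int e) * int r\<bar> < int r" by simp
  hence "x div int e - y div int e = 0"
    by (rule mult_eq_zero_of_abs_less[rotated]) (use assms in simp)
  thus False using eq assms(6) by simp
qed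

lemma psi_neg_iff:
  assumes "e > 0" "1 \<le> k" "k \<le> r"
  shows "psi e r k b < 0 \<longleftrightarrow> b < 0"
proof -
  have "(b div int e + 1) * int r - int k < 0 \<longleftrightarrow> b div int e < 0"
  proof (cases "b div int e < 0")
    case True
    hence "(b div int e + 1) * int r \<le> 0" using assms by (intro mult_nonpos_nonneg) auto
    thus ?thesis using True assms by simp
  next
    case False
    hence "(b div int e + 1) * int r \<ge> 1 * int r" using assms by (intro mult_right_mono) auto
    thus ?thesis using False assms by linarith
  qed
  thus ?thesis using assms(1) psi_div_mod(1)[OF assms(1)] by (metis of_nat_0_less_iff pos_imp_zdiv_neg_iff)
qed

lemma psi_cover:
  assumes "e > 0" "r > 0"
  obtains j y where "j < r" "psi e r (Suc j) y = x"
proof -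
  \<comment> \<open>Solve \<open>(y div e + 1) r - (j + 1) = x div e\<close> by dividing \<open>x div e\<close> by \<open>r\<close>.\<close>
  define a where "a = x div int e"
  define j where "j = nat (int r - a mod int r) - 1"
  define y where "y = (a div int r) * int e + x mod int e"
  have m: "0 \<le> a mod int r" "a mod int r < int r" using assms by auto
  have j: "int (Suc j) = int r - a mod int r" using m by (simp add: j_def)
  have "y div int e = a div int r" "y mod int e = x mod int e"
    using assms(1) by (simp_all add: y_def)
  moreover have "a = a div int r * int r + a mod int r" by simp
  ultimately have "psi e r (Suc j) y = a * int e + x mod int e"
    unfolding psi_def j by (simp add: algebra_simps)
  also have "\<dots> = x" by (simp add: a_def)
  finally have "psi e r (Suc j) y = x" .
  moreover have "j < r" using j m by simp
  ultimately show ?thesis using that by blast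
qed

lemma UN_psi_lessThan_zero:
  assumes "e > 0" "r > 0"
  shows "(\<Union>j<r. psi e r (Suc j) ` {..<0}) = {..<0}"
proof
  show "(\<Union>j<r. psi e r (Suc j) ` {..<0}) \<subseteq> {..<0}" using psi_neg_iff[OF assms(1)] by auto
  show "{..<0} \<subseteq> (\<Union>j<r. psi e r (Suc j) ` {..<0})"
  proof
    fix x :: int assume "x \<in> {..<0}"
    moreover obtain j y where "j < r" "psi e r (Suc j) y = x" using psi_cover[OF assms] .
    ultimately show "x \<in> (\<Union>j<r. psi e r (Suc j) ` {..<0})"
      using psi_neg_iff[OF assms(1), of "Suc j" r y] by auto
  qed
qed

definition uglov_set :: "nat \<Rightarrow> nat \<Rightarrow> (nat list \<times> int) list \<Rightarrow> int set" where
  "uglov_set e r c = (\<Union>j<length c. psi e r (Suc j) ` beta_of (c ! j))"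

lemma Psi_eq_beta_inv: "Psi e r c = beta_inv (uglov_set e r c)"
  by (simp add: Psi_def uglov_set_def)

lemma abacus_multi_length: "c \<in> abacus_multi r \<Longrightarrow> length c = r"
  by (auto simp: abacus_multi_def)

lemma abacus_multi_nth: "c \<in> abacus_multi r \<Longrightarrow> j < r \<Longrightarrow> c ! j \<in> abacus"
  by (auto simp: abacus_multi_def abacus_def)

lemma beta_set_Nil: "beta_set s [] = {..<s}"
  using beta_set_split[of "[]" s] by (simp add: is_partition_def)

lemma
  assumes "e > 0" "r > 0" "c \<in> abacus_multi r" "d \<in> abacus_multi r"
  shows diff_sum_uglov_set: "diff_sum G (uglov_set e r c) (uglov_set e r d)
      = (\<Sum>j<r. diff_sum (G \<circ> psi e r (Suc j)) (beta_of (c ! j)) (beta_of (d ! j)))"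
    and fin_diff_uglov_set: "fin_diff (uglov_set e r c) (uglov_set e r d)"
proof -
  have inj: "\<forall>j\<in>{..<r}. inj (psi e r (Suc j))" using inj_psi assms by blast
  have disj: "\<forall>j\<in>{..<r}. \<forall>j'\<in>{..<r}. j \<noteq> j' \<longrightarrow> range (psi e r (Suc j)) \<inter> range (psi e r (Suc j')) = {}"
    using psi_ranges_disjoint assms(1) by simp
  have fin: "\<forall>j\<in>{..<r}. fin_diff (beta_of (c ! j)) (beta_of (d ! j))"
    using fin_diff_beta_set abacus_multi_nth assms(3,4) by (simp add: abacus_def)
  show "diff_sum G (uglov_set e r c) (uglov_set e r d)
      = (\<Sum>j<r. diff_sum (G \<circ> psi e r (Suc j)) (beta_of (c ! j)) (beta_of (d ! j)))"
    "fin_diff (uglov_set e r c) (uglov_set e r d)"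
    unfolding uglov_set_def abacus_multi_length[OF assms(3)] abacus_multi_length[OF assms(4)]
    using diff_sum_UN_image[OF _ inj disj fin] fin_diff_UN_image[OF _ inj disj fin] by simp_all
qed

lemma is_beta_uglov_set:
  assumes "e > 0" "r > 0" "c \<in> abacus_multi r"
  shows "is_beta (uglov_set e r c)"
proof -
  define z where "z = replicate r ([] :: nat list, 0 :: int)"
  have z: "z \<in> abacus_multi r" by (simp add: z_def abacus_multi_def is_partition_def)
  have "uglov_set e r z = {..<0}"
    using UN_psi_lessThan_zero[OF assms(1,2)] by (simp add: uglov_set_def z_def beta_set_Nil)
  thus ?thesis using fin_diff_uglov_set[OF assms z] by (simp add: is_beta_def)
qed

lemma
  assumes "e > 0" "r > 0" "c \<in> abacus_multi r"
  shows Psi_in_abacus: "Psi e r c \<in> abacus"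
    and beta_of_Psi: "beta_of (Psi e r c) = uglov_set e r c"
  using beta_inv_in_abacus[OF is_beta_uglov_set[OF assms]] beta_of_beta_inv[OF is_beta_uglov_set[OF assms]]
  by (simp_all add: Psi_eq_beta_inv)

lemma vimage_psi_uglov_set:
  assumes "e > 0" "r > 0" "length c = r" "j < r"
  shows "psi e r (Suc j) -` uglov_set e r c = beta_of (c ! j)"
proof
  show "beta_of (c ! j) \<subseteq> psi e r (Suc j) -` uglov_set e r c"
    using assms by (auto simp: uglov_set_def)
  show "psi e r (Suc j) -` uglov_set e r c \<subseteq> beta_of (c ! j)"
  proof
    fix y assume "y \<in> psi e r (Suc j) -` uglov_set e r c"
    then obtain j' z where j': "j' < r" "z \<in> beta_of (c ! j')" "psi e r (Suc j) y = psi e r (Suc j') z"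
      using assms(3) by (auto simp: uglov_set_def)
    have "j' = j"
    proof (rule ccontr)
      assume "j' \<noteq> j"
      hence "range (psi e r (Suc j)) \<inter> range (psi e r (Suc j')) = {}"
        using psi_ranges_disjoint[OF assms(1)] j'(1) assms(4) by simp
      thus False using j'(3) by (metis disjoint_iff rangeI)
    qed
    hence "y = z" using j'(3) inj_psi[OF assms(1,2)] by (auto simp: inj_def)
    thus "y \<in> beta_of (c ! j)" using j' \<open>j' = j\<close> by simp
  qed
qed

lemma inj_on_Psi:
  assumes "e > 0" "r > 0"
  shows "inj_on (Psi e r) (abacus_multi r)"
proof (rule inj_onI)
  fix c d assume c: "c \<in> abacus_multi r" and d: "d \<in> abacus_multi r" and eq: "Psi e r c = Psi e r d"
  have "uglov_set e r c = uglov_set e r d" using beta_of_Psi[OF assms c] beta_of_Psi[OF assms d] eq by simp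
  hence "beta_of (c ! j) = beta_of (d ! j)" if "j < r" for j
    using vimage_psi_uglov_set[OF assms _ that] abacus_multi_length c d by metis
  hence "c ! j = d ! j" if "j < r" for j
    using beta_inv_eq abacus_multi_nth c d that by metis
  thus "c = d" using abacus_multi_length c d by (metis nth_equalityI)
qed

lemma Psi_surj:
  assumes "e > 0" "r > 0" "x \<in> abacus"
  obtains c where "c \<in> abacus_multi r" "Psi e r c = x"
proof -
  define B where "B = beta_of x"
  have B: "is_beta B" using is_beta_beta_set assms(3) by (simp add: B_def abacus_def)
  define P where "P j = psi e r (Suc j) -` B" for j
  have "is_beta (P j)" if "j < r" for j
  proof -
    have neg: "psi e r (Suc j) y < 0 \<longleftrightarrow> y < 0" for y using psi_neg_iff[OF assms(1)] that by simp
    have "P j - {..<0} \<subseteq> psi e r (Suc j) -` (B - {..<0})" "{..<0} - P j \<subseteq> psi e r (Suc j) -` ({..<0} - B)"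
      using neg by (auto simp: P_def)
    moreover have "finite (B - {..<0})" "finite ({..<0} - B)" using B by (auto simp: is_beta_def fin_diff_def)
    ultimately show ?thesis unfolding is_beta_def fin_diff_def
      by (meson finite_subset finite_vimageI inj_psi[OF assms(1,2)])
  qed
  note P = beta_inv_in_abacus[OF this] beta_of_beta_inv[OF this]
  define c where "c = map (\<lambda>j. beta_inv (P j)) [0..<r]"
  have c: "c \<in> abacus_multi r" using P(1) by (auto simp: abacus_multi_def c_def abacus_def)
  have "uglov_set e r c = (\<Union>j<r. psi e r (Suc j) ` P j)" using P(2) by (simp add: uglov_set_def c_def)
  also have "\<dots> = B"
  proof
    show "(\<Union>j<r. psi e r (Suc j) ` P j) \<subseteq> B" by (auto simp: P_def)
    show "B \<subseteq> (\<Union>j<r. psi e r (Suc j) ` P j)"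
    proof
      fix z assume "z \<in> B"
      moreover obtain j y where "j < r" "psi e r (Suc j) y = z" using psi_cover[OF assms(1,2)] .
      ultimately show "z \<in> (\<Union>j<r. psi e r (Suc j) ` P j)" by (auto simp: P_def)
    qed
  qed
  finally have "Psi e r c = x" using beta_inv_eq[OF assms(3)] by (simp add: Psi_eq_beta_inv B_def)
  thus ?thesis using c that by blast
qed

lemma Psi_image: "e > 0 \<Longrightarrow> r > 0 \<Longrightarrow> Psi e r ` abacus_multi r = abacus"
  using Psi_surj Psi_in_abacus by (metis image_eqI subsetI subset_antisym image_subsetI)

lemma Phi_Psi: "e > 0 \<Longrightarrow> r > 0 \<Longrightarrow> c \<in> abacus_multi r \<Longrightarrow> Phi e r (Psi e r c) = c"
  unfolding Phi_def by (rule inv_into_f_f[OF inj_on_Psi])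

lemma Phi_in_abacus_multi: "e > 0 \<Longrightarrow> r > 0 \<Longrightarrow> x \<in> abacus \<Longrightarrow> Phi e r x \<in> abacus_multi r"
  unfolding Phi_def by (rule inv_into_into) (simp add: Psi_image)

lemma Psi_Phi: "e > 0 \<Longrightarrow> r > 0 \<Longrightarrow> x \<in> abacus \<Longrightarrow> Psi e r (Phi e r x) = x"
  unfolding Phi_def by (rule f_inv_into_f) (simp add: Psi_image)

section \<open>\<open>\<Psi>\<^sub>r\<close> maps blocks into blocks\<close>

definition empty_parts :: "(nat list \<times> int) list \<Rightarrow> (nat list \<times> int) list" where
  "empty_parts c = map (\<lambda>x. ([], snd x)) c"

lemma empty_parts_in_abacus_multi: "c \<in> abacus_multi r \<Longrightarrow> empty_parts c \<in> abacus_multi r"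
  by (auto simp: abacus_multi_def empty_parts_def is_partition_def)

lemma diff_sum_id_comp_psi:
  "diff_sum ((\<lambda>b. b) \<circ> psi e r k) X Y = diff_sum (\<lambda>b. b) X Y
     + (int e * (int r - 1)) * diff_sum (level e 0) X Y + (int e * (int r - int k)) * diff_sum (\<lambda>_. 1) X Y"
proof -
  have "(\<lambda>b. b) \<circ> psi e r k
      = (\<lambda>b. b + ((int e * (int r - 1)) * level e 0 b + (int e * (int r - int k)) * 1))"
    by (rule ext) (simp add: psi_eq_add_mult level_def algebra_simps)
  thus ?thesis by (simp only: diff_sum_add diff_sum_cmult)
qed

lemma level_psi:
  assumes "e > 0"
  shows "level e j (psi e r k b) = level e j b + (int r - 1) * level e 0 b + (int r - int k)"
proof -
  define T where "T = (int r - 1) * (b div int e) + (int r - int k)"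
  have h: "psi e r k b - j = (b - j) + int e * T"
    by (simp add: psi_eq_add_mult T_def)
  have "(psi e r k b - j) div int e = T + (b - j) div int e"
    unfolding h by (rule div_mult_self2) (use assms in simp)
  thus ?thesis by (simp add: level_def T_def)
qed

lemma diff_sum_level_comp_psi:
  assumes "e > 0"
  shows "diff_sum (level e j \<circ> psi e r k) X Y = diff_sum (level e j) X Y
     + (int r - 1) * diff_sum (level e 0) X Y + (int r - int k) * diff_sum (\<lambda>_. 1) X Y"
proof -
  have "level e j \<circ> psi e r k = (\<lambda>b. level e j b + ((int r - 1) * level e 0 b + (int r - int k) * 1))"
    by (rule ext) (simp add: level_psi[OF assms])
  thus ?thesis by (simp only: diff_sum_add diff_sum_cmult)
qed

lemma sizem_eq_sum_diff_sum:
  assumes "c \<in> abacus_multi r"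
  shows "int (sizem c) = (\<Sum>j<r. diff_sum (\<lambda>b. b) (beta_of (c ! j)) {..< snd (c ! j)})"
  using diff_sum_id_beta_set abacus_multi_nth[OF assms] abacus_multi_length[OF assms]
  by (simp add: sizem_def abacus_def)

lemma count_resm_eq_sum_diff_sum:
  assumes "c \<in> abacus_multi r" "e > 0" "0 \<le> i" "i < int e"
  shows "int (count (resm e c) i) = (\<Sum>j<r. diff_sum (level e i) (beta_of (c ! j)) {..< snd (c ! j)})"
proof -
  have "int (count (resm e c) i) = (\<Sum>j<r. int (count (res1 e (fst (c ! j), snd (c ! j))) i))"
    using abacus_multi_length[OF assms(1)] by (simp add: resm_def count_sum)
  also have "\<dots> = (\<Sum>j<r. diff_sum (level e i) (beta_of (c ! j)) {..< snd (c ! j)})"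
    using count_res1_diff_sum[OF assms(2-4)] abacus_multi_nth[OF assms(1)] by simp
  finally show ?thesis .
qed

lemma diff_sum_Psi_empty_parts:
  assumes "e > 0" "r > 0" "c \<in> abacus_multi r"
  shows "diff_sum G (beta_of (Psi e r c)) (beta_of (Psi e r (empty_parts c)))
    = (\<Sum>j<r. diff_sum (G \<circ> psi e r (Suc j)) (beta_of (c ! j)) {..< snd (c ! j)})"
  using empty_parts_in_abacus_multi[OF assms(3)] abacus_multi_length[OF assms(3)]
  by (simp add: beta_of_Psi assms diff_sum_uglov_set empty_parts_def beta_set_Nil)

lemma
  assumes "e > 0" "r > 0" "c \<in> abacus_multi r"
  defines "X \<equiv> Psi e r c" and "X\<^sub>0 \<equiv> Psi e r (empty_parts c)"
  shows charge_Psi_empty_parts: "snd X = snd X\<^sub>0"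
    and size_Psi_empty_parts:
      "int (sum_list (fst X)) = int (sum_list (fst X\<^sub>0)) + int (sizem c)
         + int e * (int r - 1) * int (count (resm e c) 0)"
    and count_res1_Psi_empty_parts: "0 \<le> i \<Longrightarrow> i < int e \<Longrightarrow>
      int (count (res1 e X) i) = int (count (res1 e X\<^sub>0) i) + int (count (resm e c) i)
         + (int r - 1) * int (count (resm e c) 0)"
proof -
  have X_abacus: "X \<in> abacus" and X\<^sub>0_abacus: "X\<^sub>0 \<in> abacus"
    using Psi_in_abacus assms(1-3) empty_parts_in_abacus_multi by (simp_all add: X_def X\<^sub>0_def)
  hence X: "is_partition (fst X)" and X\<^sub>0: "is_partition (fst X\<^sub>0)" by (simp_all add: abacus_def)
  note diff = diff_sum_Psi_empty_parts[OF assms(1-3), folded X_def X\<^sub>0_def]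
  have part: "is_partition (fst (c ! j))" if "j < r" for j
    using abacus_multi_nth[OF assms(3) that] by (simp add: abacus_def)
  have "snd X - snd X\<^sub>0 = diff_sum (\<lambda>_. 1) (beta_of X) (beta_of X\<^sub>0)"
    by (simp add: diff_sum_one_beta_set_charge[OF X X\<^sub>0])
  also have "\<dots> = 0" by (simp add: diff comp_def diff_sum_one_beta_set part)
  finally show charge: "snd X = snd X\<^sub>0" by simp
  have stat: "diff_sum G (beta_of X) {..<snd X} - diff_sum G (beta_of X\<^sub>0) {..<snd X}
      = (\<Sum>j<r. diff_sum (G \<circ> psi e r (Suc j)) (beta_of (c ! j)) {..< snd (c ! j)})" for G
    using diff_sum_beta_set[OF X X\<^sub>0, where s = "snd X" and s' = "snd X" and G = G] diff charge by (simp add: diff_sum_def)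
  show "int (sum_list (fst X)) = int (sum_list (fst X\<^sub>0)) + int (sizem c)
         + int e * (int r - 1) * int (count (resm e c) 0)"
    using stat[of "\<lambda>b. b"] charge assms(1)
    by (simp add: diff_sum_id_beta_set X X\<^sub>0 diff_sum_id_comp_psi diff_sum_one_beta_set part
        sum.distrib sum_distrib_left sizem_eq_sum_diff_sum[OF assms(3)]
        count_resm_eq_sum_diff_sum[OF assms(3)] mult.assoc)
  assume i: "0 \<le> i" "i < int e"
  show "int (count (res1 e X) i) = int (count (res1 e X\<^sub>0) i) + int (count (resm e c) i)
         + (int r - 1) * int (count (resm e c) 0)"
    using stat[of "level e i"] charge assms(1) i
    by (simp add: count_res1_diff_sum X_abacus X\<^sub>0_abacus
        diff_sum_level_comp_psi diff_sum_one_beta_set part sum.distrib sum_distrib_left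
        count_resm_eq_sum_diff_sum[OF assms(3)])
qed

lemma empty_parts_eq_iff: "empty_parts c = empty_parts d \<longleftrightarrow> map snd c = map snd d"
proof -
  have "empty_parts c = map (Pair []) (map snd c)" for c by (simp add: empty_parts_def)
  thus ?thesis by (metis Pair_inject list.inj_map_strong)
qed

lemma same_block1_Psi:
  assumes "e > 0" "r > 0" "c \<in> abacus_multi r" "d \<in> abacus_multi r" and block: "same_block e c d"
  shows "same_block1 e (Psi e r c) (Psi e r d)"
proof -
  have empty: "empty_parts c = empty_parts d"
    using block by (simp add: same_block_def empty_parts_eq_iff)
  have size: "sizem c = sizem d" and count: "count (resm e c) i = count (resm e d) i" for i
    using block by (simp_all add: same_block_def)
  have "snd (Psi e r c) = snd (Psi e r d)"
    using charge_Psi_empty_parts[OF assms(1,2)] assms(3,4) empty by metis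
  moreover have "int (sum_list (fst (Psi e r c))) = int (sum_list (fst (Psi e r d)))"
    using size_Psi_empty_parts[OF assms(1,2)] assms(3,4) empty size count by metis
  moreover have "count (res1 e (Psi e r c)) i = count (res1 e (Psi e r d)) i" for i
  proof (cases "0 \<le> i \<and> i < int e")
    case True
    hence "int (count (res1 e (Psi e r c)) i) = int (count (res1 e (Psi e r d)) i)"
      using count_res1_Psi_empty_parts[OF assms(1,2)] assms(3,4) empty count by metis
    thus ?thesis by simp
  next
    case False
    thus ?thesis using res1_range[OF assms(1)] by (metis atLeastLessThan_iff count_eq_zero_iff subsetD)
  qed
  ultimately show ?thesis by (simp add: same_block1_def multiset_eqI)
qed

section \<open>The \<open>e\<close>-quotients of \<open>\<Psi>\<^sub>r(c)\<close>\<close>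

lemma mod_eq_imp_div_diff: "b mod int e = i \<Longrightarrow> (b - i) div int e = b div int e"
  by (metis minus_mod_eq_mult_div mult.commute nonzero_mult_div_cancel_left div_by_0 mult_zero_left
      of_nat_eq_0_iff)

lemma fin_diff_quot_beta:
  assumes "fin_diff X Y"
  shows "fin_diff (quot_beta e X i) (quot_beta e Y i)"
proof -
  have "quot_beta e X i - quot_beta e Y i \<subseteq> (\<lambda>b. (b - int i) div int e) ` (X - Y)" for X Y
    by (auto simp: quot_beta_def)
  thus ?thesis using assms unfolding fin_diff_def by (meson finite_imageI finite_subset)
qed

lemma quot_beta_lessThan_zero:
  assumes "i < e"
  shows "quot_beta e {..<0} i = {..<0}"
proof
  show "quot_beta e {..<0} i \<subseteq> {..<0}"
    using assms by (auto simp: quot_beta_def mod_eq_imp_div_diff pos_imp_zdiv_neg_iff)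
  show "{..<0} \<subseteq> quot_beta e {..<0} i"
  proof
    fix a :: int assume "a \<in> {..<0}"
    hence "(a + 1) * int e \<le> 0" by (intro mult_nonpos_nonneg) auto
    hence "a * int e + int i < 0" using assms by (simp add: algebra_simps)
    moreover have "(a * int e + int i) mod int e = int i" "(a * int e + int i - int i) div int e = a"
      using assms by simp_all
    ultimately show "a \<in> quot_beta e {..<0} i" unfolding quot_beta_def by force
  qed
qed

lemma is_beta_quot_beta: "is_beta X \<Longrightarrow> i < e \<Longrightarrow> is_beta (quot_beta e X i)"
  unfolding is_beta_def using fin_diff_quot_beta quot_beta_lessThan_zero by metis

lemma
  assumes "x \<in> abacus" "i < e"
  shows eta_in_abacus: "eta e x i \<in> abacus"
    and beta_of_eta: "beta_of (eta e x i) = quot_beta e (beta_of x) i"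
  using beta_inv_in_abacus[OF is_beta_quot_beta[OF is_beta_beta_set assms(2)]]
    beta_of_beta_inv[OF is_beta_quot_beta[OF is_beta_beta_set assms(2)]] assms(1)
  by (simp_all add: eta_def abacus_def)

definition quot_multi :: "nat \<Rightarrow> (nat list \<times> int) list \<Rightarrow> nat \<Rightarrow> (nat list \<times> int) list" where
  "quot_multi e c i = map (\<lambda>x. eta e x i) c"

lemma quot_multi_in_abacus_multi:
  "c \<in> abacus_multi r \<Longrightarrow> i < e \<Longrightarrow> quot_multi e c i \<in> abacus_multi r"
  using eta_in_abacus by (auto simp: quot_multi_def abacus_multi_def abacus_def)

lemma quot_beta_UN_psi:
  assumes "i < e"
  shows "quot_beta e (\<Union>j\<in>J. psi e r (Suc j) ` A j) i = (\<Union>j\<in>J. psi 1 r (Suc j) ` quot_beta e (A j) i)"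
proof -
  have e: "e > 0" using assms by simp
  have mod: "psi e r k y mod int e = int i \<longleftrightarrow> y mod int e = int i" for k y
    using psi_div_mod(2)[OF e] by simp
  have div: "(psi e r k y - int i) div int e = psi 1 r k ((y - int i) div int e)"
    if "y mod int e = int i" for k y
    using that mod[of k y] psi_div_mod(1)[OF e]
    by (simp add: mod_eq_imp_div_diff psi_one)
  show ?thesis
  proof (intro equalityI subsetI)
    fix a assume "a \<in> quot_beta e (\<Union>j\<in>J. psi e r (Suc j) ` A j) i"
    then obtain j y where "j \<in> J" "y \<in> A j" "y mod int e = int i"
      "a = (psi e r (Suc j) y - int i) div int e" by (auto simp: quot_beta_def mod)
    thus "a \<in> (\<Union>j\<in>J. psi 1 r (Suc j) ` quot_beta e (A j) i)" by (auto simp: div quot_beta_def)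
  next
    fix a assume "a \<in> (\<Union>j\<in>J. psi 1 r (Suc j) ` quot_beta e (A j) i)"
    then obtain j y where "j \<in> J" "y \<in> A j" "y mod int e = int i"
      "a = psi 1 r (Suc j) ((y - int i) div int e)" by (auto simp: quot_beta_def)
    thus "a \<in> quot_beta e (\<Union>j\<in>J. psi e r (Suc j) ` A j) i"
      unfolding quot_beta_def by (intro CollectI exI[of _ "psi e r (Suc j) y"]) (auto simp: div mod)
  qed
qed

lemma quot_beta_uglov_set:
  assumes "c \<in> abacus_multi r" "i < e"
  shows "quot_beta e (uglov_set e r c) i = uglov_set 1 r (quot_multi e c i)"
  using quot_beta_UN_psi[OF assms(2)] beta_of_eta abacus_multi_nth[OF assms(1)] assms
  by (simp add: uglov_set_def quot_multi_def abacus_multi_length[OF assms(1)])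

lemma eta_Psi:
  assumes "e > 0" "r > 0" "c \<in> abacus_multi r" "i < e"
  shows "eta e (Psi e r c) i = Psi 1 r (quot_multi e c i)"
  unfolding eta_def beta_of_Psi[OF assms(1-3)] quot_beta_uglov_set[OF assms(3,4)]
  by (rule Psi_eq_beta_inv[symmetric])

section \<open>The Rouquier inequality for the components\<close>

lemma part_le_sum_list: "is_partition la \<Longrightarrow> part la i \<le> sum_list la"
proof (cases "1 \<le> i \<and> i \<le> length la")
  case True
  hence "part la i \<le> (\<Sum>i=1..length la. part la i)" by (intro member_le_sum) auto
  thus ?thesis using sum_list_part[of la] by simp
next
  case False thus ?thesis by (auto simp: part_def)
qed

lemma beta_set_mem_bound:
  assumes "is_partition la" "T \<in> beta_set s la"
  shows "T + 1 - s \<le> int (sum_list la)"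
proof -
  obtain i where "1 \<le> i" "T = bead s la i" using assms(2) by (auto simp: beta_set_bead_image)
  hence "T + 1 - s \<le> int (part la i)" by (simp add: bead_def)
  thus ?thesis using part_le_sum_list[OF assms(1), of i] by linarith
qed

lemma beta_set_not_mem_bound:
  assumes la: "is_partition la" and T: "T \<notin> beta_set s la"
  shows "s - T \<le> int (sum_list la)"
proof (cases "T < s")
  case False thus ?thesis by simp
next
  case True
  define k where "k = nat (s - T)"
  have k: "1 \<le> k" "int k = s - T" using True by (auto simp: k_def)
  have "bead s la k \<in> beta_set s la" using k by (auto simp: beta_set_bead_image)
  hence "bead s la k \<noteq> T" using T by auto
  hence pk: "part la k \<ge> 1" using k by (simp add: bead_def)
  hence kl: "k \<le> length la" by (cases "k \<le> length la") (auto simp: part_def)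
  have "(\<Sum>i=1..k. (1::nat)) \<le> (\<Sum>i=1..k. part la i)"
    using part_mono[OF la, of _ k] pk by (intro sum_mono) (auto intro: order.trans)
  also have "\<dots> \<le> (\<Sum>i=1..length la. part la i)" by (rule sum_mono2) (use kl in auto)
  finally have "k \<le> sum_list la" using sum_list_part[of la] by simp
  thus ?thesis using k by simp
qed

lemma count_resm_one:
  assumes "c \<in> abacus_multi r"
  shows "count (resm 1 c) 0 = sizem c"
proof -
  have "level 1 0 = (\<lambda>b. b)" by (rule ext) (simp add: level_def)
  thus ?thesis using count_resm_eq_sum_diff_sum[OF assms, of 1 0] sizem_eq_sum_diff_sum[OF assms] by simp
qed

lemma size_Psi_one:
  assumes "r > 0" "c \<in> abacus_multi r"
  shows "int (sum_list (fst (Psi 1 r c)))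
    = int (sum_list (fst (Psi 1 r (empty_parts c)))) + int r * int (sizem c)"
  using size_Psi_empty_parts[of 1 r c] count_resm_one[OF assms(2)] assms by (simp add: algebra_simps)

lemma
  assumes "e > 0" "r > 0" "c \<in> abacus_multi r" "j < r"
  defines "X\<^sub>0 \<equiv> Psi e r (empty_parts c)"
  shows charge_Psi_empty_parts_le: "snd X\<^sub>0 - psi e r (Suc j) (snd (c ! j)) \<le> int (sum_list (fst X\<^sub>0))"
    and charge_Psi_empty_parts_ge: "psi e r (Suc j) (snd (c ! j) - 1) + 1 - snd X\<^sub>0 \<le> int (sum_list (fst X\<^sub>0))"
proof -
  have c\<^sub>0: "empty_parts c \<in> abacus_multi r" using empty_parts_in_abacus_multi[OF assms(3)] .
  have X\<^sub>0: "is_partition (fst X\<^sub>0)" using Psi_in_abacus[OF assms(1,2) c\<^sub>0] by (simp add: X\<^sub>0_def abacus_def)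
  have "psi e r (Suc j) -` beta_of X\<^sub>0 = {..< snd (c ! j)}"
    unfolding X\<^sub>0_def beta_of_Psi[OF assms(1,2) c\<^sub>0]
      vimage_psi_uglov_set[OF assms(1,2) abacus_multi_length[OF c\<^sub>0] assms(4)]
    using assms(4) abacus_multi_length[OF assms(3)] by (simp add: empty_parts_def beta_set_Nil)
  hence mem: "psi e r (Suc j) a \<in> beta_of X\<^sub>0 \<longleftrightarrow> a < snd (c ! j)" for a by blast
  show "snd X\<^sub>0 - psi e r (Suc j) (snd (c ! j)) \<le> int (sum_list (fst X\<^sub>0))"
    using beta_set_not_mem_bound[OF X\<^sub>0] mem by blast
  show "psi e r (Suc j) (snd (c ! j) - 1) + 1 - snd X\<^sub>0 \<le> int (sum_list (fst X\<^sub>0))"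
    using beta_set_mem_bound[OF X\<^sub>0] mem by simp
qed

lemma weight_nth_le_sum_sizem_quot_multi:
  assumes "c \<in> abacus_multi r" "j < r"
  shows "weight e (c ! j) \<le> (\<Sum>i<e. sizem (quot_multi e c i))"
  unfolding weight_def
proof (rule sum_mono)
  fix i
  have "sum_list (fst (quot_multi e c i ! j)) \<le> (\<Sum>k<r. sum_list (fst (quot_multi e c i ! k)))"
    by (rule member_le_sum) (use assms(2) in auto)
  thus "sum_list (fst (eta e (c ! j) i)) \<le> sizem (quot_multi e c i)"
    using assms abacus_multi_length[OF assms(1)] by (simp add: sizem_def quot_multi_def)
qed

lemma weight_Psi_ge:
  assumes e: "e > 0" and r: "r > 0" and c: "c \<in> abacus_multi r" and j: "j < r"
    and i: "i < e" "i' < e" "i \<noteq> i'"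
  defines "\<gamma> \<equiv> \<lambda>k. int (sum_list (fst (Psi 1 r (empty_parts (quot_multi e c k)))))"
  shows "int r * int (weight e (c ! j)) + \<gamma> i + \<gamma> i' \<le> int (weight e (Psi e r c))"
proof -
  define q where "q k = quot_multi e c k" for k
  have q: "q k \<in> abacus_multi r" if "k < e" for k
    using quot_multi_in_abacus_multi[OF c that] by (simp add: q_def)
  have "int (weight e (Psi e r c)) = (\<Sum>k<e. int r * int (sizem (q k)) + \<gamma> k)"
    unfolding weight_def of_nat_sum
    by (rule sum.cong[OF refl]) (use size_Psi_one[OF r q] in \<open>simp add: eta_Psi[OF e r c] q_def \<gamma>_def\<close>)
  moreover have "int r * int (weight e (c ! j)) \<le> (\<Sum>k<e. int r * int (sizem (q k)))"
  proof -
    have "int (weight e (c ! j)) \<le> int (\<Sum>k<e. sizem (q k))"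
      using weight_nth_le_sum_sizem_quot_multi[OF c j] by (simp only: of_nat_le_iff q_def)
    hence "int r * int (weight e (c ! j)) \<le> int r * int (\<Sum>k<e. sizem (q k))"
      by (rule mult_left_mono) simp
    thus ?thesis by (simp add: sum_distrib_left)
  qed
  moreover have "\<gamma> i + \<gamma> i' \<le> (\<Sum>k<e. \<gamma> k)"
    using sum_mono2[of "{..<e}" "{i, i'}" \<gamma>] i by (simp add: \<gamma>_def)
  ultimately show ?thesis by (simp add: sum.distrib)
qed

lemma rouquier_nth_if_r_rouquier_Psi:
  assumes e: "e > 0" and r: "r > 0" and c: "c \<in> abacus_multi r"
    and rq: "r_rouquier e r (Psi e r c)" and j: "j < r"
  shows "rouquier e (c ! j)"
  unfolding rouquier_def
proof (intro allI impI)
  fix i assume i: "i + 1 < e"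
  define q where "q k = quot_multi e c k" for k
  define X\<^sub>0 where "X\<^sub>0 k = Psi 1 r (empty_parts (q k))" for k
  define t where "t k = snd (eta e (Psi e r c) k)" for k
  define U where "U k = snd (eta e (c ! j) k)" for k
  have q: "q k \<in> abacus_multi r" if "k < e" for k
    using quot_multi_in_abacus_multi[OF c that] by (simp add: q_def)
  have snd_q: "snd (q k ! j) = U k" for k
    using j abacus_multi_length[OF c] by (simp add: q_def quot_multi_def U_def)
  have t: "t k = snd (X\<^sub>0 k)" if "k < e" for k
    using charge_Psi_empty_parts[OF zero_less_one r q[OF that]] eta_Psi[OF e r c that]
    by (simp add: t_def X\<^sub>0_def q_def)
  have "int r * int (weight e (c ! j)) + int (sum_list (fst (X\<^sub>0 i))) + int (sum_list (fst (X\<^sub>0 (Suc i))))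
      \<le> int (weight e (Psi e r c))"
    using weight_Psi_ge[OF e r c j, of i "Suc i"] i by (simp add: X\<^sub>0_def q_def)
  moreover have "t (Suc i) - ((U (Suc i) + 1) * int r - int (Suc j)) \<le> int (sum_list (fst (X\<^sub>0 (Suc i))))"
    using charge_Psi_empty_parts_le[OF zero_less_one r q[of "Suc i"] j] i
    by (simp add: t X\<^sub>0_def snd_q psi_one)
  moreover have "U i * int r - int (Suc j) + 1 - t i \<le> int (sum_list (fst (X\<^sub>0 i)))"
    using charge_Psi_empty_parts_ge[OF zero_less_one r q[of i] j] i
    by (simp add: t X\<^sub>0_def snd_q psi_one algebra_simps)
  moreover have "int (weight e (Psi e r c)) \<le> t (Suc i) - t i + int r"
    using rq i by (simp add: r_rouquier_def t_def)
  ultimately have "int r * (int (weight e (c ! j)) - (U (Suc i) - U i) - 1) < int r * 1"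
    by (simp add: algebra_simps)
  hence "int (weight e (c ! j)) \<le> U (Suc i) - U i + 1" using r by (simp only: mult_less_cancel_left_pos)
  thus "int (weight e (c ! j)) \<le> snd (eta e (c ! j) (Suc i)) - snd (eta e (c ! j) i) + 1"
    by (simp add: U_def)
qed

section \<open>Blocks of \<open>\<Phi>\<^sub>r(R)\<close>\<close>

lemma pairwise_disjnt_blocks_multi: "pairwise disjnt (blocks_multi e m)"
proof (rule pairwiseI)
  fix A B assume "A \<in> blocks_multi e m" "B \<in> blocks_multi e m" "A \<noteq> B"
  then obtain c d where A: "A = {x \<in> abacus_multi m. same_block e c x}"
    and B: "B = {x \<in> abacus_multi m. same_block e d x}" by (auto simp: blocks_multi_def)
  show "disjnt A B"
  proof (rule ccontr)
    assume "\<not> disjnt A B"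
    then obtain x where "same_block e c x" "same_block e d x" using A B by (auto simp: disjnt_def)
    hence "same_block e c y \<longleftrightarrow> same_block e d y" for y by (auto simp: same_block_def)
    hence "A = B" using A B by simp
    thus False using \<open>A \<noteq> B\<close> by simp
  qed
qed

lemma blocks1_subset_abacus: "R \<in> blocks1 e \<Longrightarrow> R \<subseteq> abacus"
  by (auto simp: blocks1_def)

lemma Psi_mem_block_if_same_block_Phi:
  assumes "e > 0" "r > 0" "R \<in> blocks1 e" "x \<in> R" "d \<in> abacus_multi r"
    and "same_block e (Phi e r x) d"
  shows "Psi e r d \<in> R"
proof -
  obtain x\<^sub>0 where R: "R = {y \<in> abacus. same_block1 e x\<^sub>0 y}"
    using assms(3) by (auto simp: blocks1_def)
  have x: "x \<in> abacus" using assms(4) R by simp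
  have "same_block1 e (Psi e r (Phi e r x)) (Psi e r d)"
    using same_block1_Psi[OF assms(1,2) Phi_in_abacus_multi[OF assms(1,2) x] assms(5,6)] .
  hence "same_block1 e x (Psi e r d)" using Psi_Phi[OF assms(1,2) x] by simp
  moreover have "same_block1 e x\<^sub>0 x" using assms(4) R by simp
  ultimately have "same_block1 e x\<^sub>0 (Psi e r d)" by (simp add: same_block1_def)
  thus ?thesis using Psi_in_abacus[OF assms(1,2,5)] R by simp
qed

lemma Phi_image_block_eq_Union:
  assumes e: "e > 0" and r: "r > 0" and R: "R \<in> blocks1 e"
  shows "Phi e r ` R = \<Union>{Bl \<in> blocks_multi e r. Bl \<subseteq> Phi e r ` R}"
proof -
  have "Phi e r x \<in> \<Union>{Bl \<in> blocks_multi e r. Bl \<subseteq> Phi e r ` R}" if x: "x \<in> R" for x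
  proof -
    define Bl where "Bl = {d \<in> abacus_multi r. same_block e (Phi e r x) d}"
    have Phi_x: "Phi e r x \<in> abacus_multi r"
      using Phi_in_abacus_multi[OF e r] x blocks1_subset_abacus[OF R] by blast
    have "d \<in> Phi e r ` R" if "d \<in> Bl" for d
      using Psi_mem_block_if_same_block_Phi[OF e r R x] Phi_Psi[OF e r] that
      by (auto simp: Bl_def intro: image_eqI[where x = "Psi e r d"])
    moreover have "Bl \<in> blocks_multi e r" using Phi_x by (auto simp: Bl_def blocks_multi_def)
    moreover have "Phi e r x \<in> Bl" using Phi_x by (simp add: Bl_def same_block_def)
    ultimately show ?thesis by blast
  qed
  thus ?thesis by blast
qed

lemma rouquier_multi_Phi:
  assumes e: "e > 0" and r: "r > 0" and x: "x \<in> abacus" and rq: "r_rouquier e r x"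
  shows "rouquier_multi e (Phi e r x)"
proof -
  have c: "Phi e r x \<in> abacus_multi r" using Phi_in_abacus_multi[OF e r x] .
  have "r_rouquier e r (Psi e r (Phi e r x))" using Psi_Phi[OF e r x] rq by simp
  thus ?thesis using rouquier_nth_if_r_rouquier_Psi[OF e r c] abacus_multi_length[OF c]
    by (simp add: rouquier_multi_def)
qed

theorem corollary3p4:
  fixes e r :: nat and R :: "(nat list \<times> int) set"
  assumes "e \<ge> 2" and "r \<ge> 1"
    and "r_rouquier_block e r R"
  shows "\<exists>\<B>. \<B> \<subseteq> blocks_multi e r \<and> pairwise disjnt \<B> \<and>
             Phi e r ` R = \<Union>\<B> \<and> (\<forall>Bl\<in>\<B>. rouquier_block e r Bl)"
proof -
  have e: "e > 0" and r: "r > 0" using assms(1,2) by auto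
  have R: "R \<in> blocks1 e" and rq: "\<forall>x\<in>R. r_rouquier e r x"
    using assms(3) by (simp_all add: r_rouquier_block_def)
  define \<B> where "\<B> = {Bl \<in> blocks_multi e r. Bl \<subseteq> Phi e r ` R}"
  have "rouquier_multi e d" if "d \<in> Phi e r ` R" for d
    using that rouquier_multi_Phi[OF e r] rq blocks1_subset_abacus[OF R] by blast
  hence "\<forall>Bl\<in>\<B>. rouquier_block e r Bl" by (auto simp: \<B>_def rouquier_block_def)
  moreover have "pairwise disjnt \<B>"
    unfolding \<B>_def by (rule pairwise_subset[OF pairwise_disjnt_blocks_multi]) blast
  moreover have "\<B> \<subseteq> blocks_multi e r" "Phi e r ` R = \<Union>\<B>"
    using Phi_image_block_eq_Union[OF e r R] by (simp_all add: \<B>_def)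
  ultimately show ?thesis by blast
qed

end
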